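(* Let $G$ be a simple connected graph with at least two vertices, and let $f$ be a harmonic eigenfunction for $\lambda_1$ of $G$. Let $u,v$ be vertices with $f(u)\le f(z)\le f(v)$ for all $z\in V(G)$. Define \[ \mathrm{vol}_P=\sum_{z:\,f(z)\ge 0} d(z),\qquad \mathrm{vol}_N=\sum_{z:\,f(z)<0} d(z). \] Then \[ \lambda_1(G)\ge \frac{2}{\mathrm{dist}(u,v)\sqrt{\mathrm{vol}_P\cdot\mathrm{vol}_N}}. \]
   Context: For a connected simple graph $G$ with degree function $d$, the normalized Laplacian spectral gap is \[ \lambda_1=\inf_{f\neq 0,\ \sum_u f(u)d(u)=0}\frac{\sum_{u\sim v}(f(u)-f(v))^2}{\sum_v f(v)^2 d(v)}, \] where the numerator sums over edges. A harmonic eigenfunction for $\lambda_1$ is a nonzero function $f:V(G)\to\mathbb{R}$ with $\sum_u f(u)d(u)=0$ that attains this infimum. Here $\mathrm{dist}(u,v)$ is the graph distance. *)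

theory Defs
  imports "HOL-Analysis.Analysis"
begin

definition simple_graph :: "'a set \<Rightarrow> ('a \<Rightarrow> 'a \<Rightarrow> bool) \<Rightarrow> bool" where
  "simple_graph V E \<longleftrightarrow> finite V \<and> (\<forall>u v. E u v \<longrightarrow> u \<in> V \<and> v \<in> V)
     \<and> (\<forall>u v. E u v \<longrightarrow> E v u) \<and> (\<forall>u. \<not> E u u)"

definition degree :: "'a set \<Rightarrow> ('a \<Rightarrow> 'a \<Rightarrow> bool) \<Rightarrow> 'a \<Rightarrow> nat" where
  "degree V E u = card {v \<in> V. E u v}"

definition is_walk :: "'a set \<Rightarrow> ('a \<Rightarrow> 'a \<Rightarrow> bool) \<Rightarrow> 'a list \<Rightarrow> 'a \<Rightarrow> 'a \<Rightarrow> bool" where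
  "is_walk V E p u v \<longleftrightarrow> p \<noteq> [] \<and> hd p = u \<and> last p = v \<and> set p \<subseteq> V
     \<and> (\<forall>i. Suc i < length p \<longrightarrow> E (p ! i) (p ! Suc i))"

definition graph_connected :: "'a set \<Rightarrow> ('a \<Rightarrow> 'a \<Rightarrow> bool) \<Rightarrow> bool" where
  "graph_connected V E \<longleftrightarrow> (\<forall>u\<in>V. \<forall>v\<in>V. \<exists>p. is_walk V E p u v)"

definition graph_dist :: "'a set \<Rightarrow> ('a \<Rightarrow> 'a \<Rightarrow> bool) \<Rightarrow> 'a \<Rightarrow> 'a \<Rightarrow> nat" where
  "graph_dist V E u v = (LEAST n. \<exists>p. is_walk V E p u v \<and> length p = Suc n)"

text \<open>Sum over edges: each unordered edge {u,v} counted once, i.e. half of the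
sum over ordered adjacent pairs.\<close>

definition rayleigh :: "'a set \<Rightarrow> ('a \<Rightarrow> 'a \<Rightarrow> bool) \<Rightarrow> ('a \<Rightarrow> real) \<Rightarrow> real" where
  "rayleigh V E f =
     ((\<Sum>u\<in>V. \<Sum>v\<in>{w \<in> V. E u w}. (f u - f v)\<^sup>2) / 2)
     / (\<Sum>v\<in>V. (f v)\<^sup>2 * real (degree V E v))"

definition admissible :: "'a set \<Rightarrow> ('a \<Rightarrow> 'a \<Rightarrow> bool) \<Rightarrow> ('a \<Rightarrow> real) \<Rightarrow> bool" where
  "admissible V E f \<longleftrightarrow> (\<exists>u\<in>V. f u \<noteq> 0) \<and> (\<Sum>u\<in>V. f u * real (degree V E u)) = 0"

definition lambda1 :: "'a set \<Rightarrow> ('a \<Rightarrow> 'a \<Rightarrow> bool) \<Rightarrow> real" where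
  "lambda1 V E = Inf {rayleigh V E f | f. admissible V E f}"

definition harmonic_eigenfunction :: "'a set \<Rightarrow> ('a \<Rightarrow> 'a \<Rightarrow> bool) \<Rightarrow> ('a \<Rightarrow> real) \<Rightarrow> bool" where
  "harmonic_eigenfunction V E f \<longleftrightarrow> admissible V E f \<and> rayleigh V E f = lambda1 V E"

definition vol_P :: "'a set \<Rightarrow> ('a \<Rightarrow> 'a \<Rightarrow> bool) \<Rightarrow> ('a \<Rightarrow> real) \<Rightarrow> real" where
  "vol_P V E f = (\<Sum>z\<in>{z \<in> V. f z \<ge> 0}. real (degree V E z))"

definition vol_N :: "'a set \<Rightarrow> ('a \<Rightarrow> 'a \<Rightarrow> bool) \<Rightarrow> ('a \<Rightarrow> real) \<Rightarrow> real" where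
  "vol_N V E f = (\<Sum>z\<in>{z \<in> V. f z < 0}. real (degree V E z))"

end

theory Submission
  imports Defs
begin

text \<open>Write \<open>m = f u \<le> 0 \<le> M = f v\<close> and \<open>d\<close> for the degree. Along a shortest
\<open>u\<close>--\<open>v\<close> path the increments of \<open>f\<close> add up to \<open>M - m\<close>, so by Cauchy--Schwarz the edge
sum of the Rayleigh quotient is at least \<open>(M - m)\<^sup>2 / dist(u, v)\<close>. For the denominator,
\<open>f\<^sup>2 \<le> M f\<close> where \<open>f \<ge> 0\<close> and \<open>f\<^sup>2 \<le> m f\<close> where \<open>f < 0\<close>; since \<open>\<Sum> f d = 0\<close> this gives
\<open>\<Sum> f\<^sup>2 d \<le> (M - m) S\<close> with \<open>S = \<Sum>\<^bsub>f \<ge> 0\<^esub> f d = - \<Sum>\<^bsub>f < 0\<^esub> f d\<close>. Finally \<open>S \<le> M vol\<^sub>P\<close> and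
\<open>S \<le> -m vol\<^sub>N\<close>, hence \<open>S\<^sup>2 \<le> M (-m) vol\<^sub>P vol\<^sub>N \<le> ((M - m) / 2)\<^sup>2 vol\<^sub>P vol\<^sub>N\<close> by AM--GM.\<close>

lemma is_walk_shortcut:
  assumes w: "is_walk V E p x y" and ij: "i < j" "j < length p" and eq: "p ! i = p ! j"
  shows "is_walk V E (take i p @ drop j p) x y"
proof -
  let ?q = "take i p @ drop j p"
  have ne: "p \<noteq> []" and hd: "hd p = x" and la: "last p = y" and st: "set p \<subseteq> V"
    and ed: "\<And>k. Suc k < length p \<Longrightarrow> E (p ! k) (p ! Suc k)"
    using w unfolding is_walk_def by auto
  have nth: "?q ! k = (if k < i then p ! k else p ! (j + k - i))" if "k < length ?q" for k
    using that ij by (auto simp: nth_append)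
  have "?q \<noteq> []" using ij by simp
  moreover have "hd ?q = x"
    using nth[of 0] ij eq hd ne \<open>?q \<noteq> []\<close> by (cases "i = 0") (auto simp: hd_conv_nth)
  moreover have "last ?q = y" using ij la by simp
  moreover have "set ?q \<subseteq> V" using st set_drop_subset[of j p] set_take_subset[of i p] by auto
  moreover have "E (?q ! k) (?q ! Suc k)" if k: "Suc k < length ?q" for k
  proof -
    consider "Suc k < i" | "Suc k = i" | "i \<le> k" by linarith
    then show ?thesis
    proof cases
      case 3
      then have "?q ! k = p ! (j + k - i)" "?q ! Suc k = p ! Suc (j + k - i)"
        using nth[of k] nth[of "Suc k"] k ij by (auto simp: Suc_diff_le)
      moreover have "Suc (j + k - i) < length p" using k 3 ij by simp
      ultimately show ?thesis using ed by simp
    qed (use nth[of k] nth[of "Suc k"] k ed[of k] ij eq in auto)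
  qed
  ultimately show ?thesis unfolding is_walk_def by blast
qed

lemma shortest_walk_exists:
  assumes "graph_connected V E" "x \<in> V" "y \<in> V"
  obtains p where "is_walk V E p x y" "length p = Suc (graph_dist V E x y)" "distinct p"
proof -
  let ?P = "\<lambda>n. \<exists>p. is_walk V E p x y \<and> length p = Suc n"
  have walk_length: "?P (length q - 1)" if "is_walk V E q x y" for q
  proof -
    have "q \<noteq> []" using that by (simp add: is_walk_def)
    then have "length q = Suc (length q - 1)" by simp
    with that show ?thesis by blast
  qed
  obtain p0 where "is_walk V E p0 x y" using assms unfolding graph_connected_def by blast
  then have "?P (graph_dist V E x y)"
    unfolding graph_dist_def by (rule LeastI[where P = ?P, OF walk_length])
  then obtain p where p: "is_walk V E p x y" "length p = Suc (graph_dist V E x y)" by blast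
  have shortest: "length p \<le> length q" if q: "is_walk V E q x y" for q
  proof -
    have "graph_dist V E x y \<le> length q - 1"
      unfolding graph_dist_def by (rule Least_le[where P = ?P, OF walk_length[OF q]])
    moreover have "q \<noteq> []" using q by (simp add: is_walk_def)
    ultimately show ?thesis using p(2) by (cases q) auto
  qed
  have "distinct p"
  proof (rule ccontr)
    assume "\<not> distinct p"
    then obtain i j where "i < length p" "j < length p" "i \<noteq> j" "p ! i = p ! j"
      by (auto simp: distinct_conv_nth)
    then obtain i j where "i < j" "j < length p" "p ! i = p ! j"
      by (metis linorder_neqE_nat)
    with shortest[OF is_walk_shortcut[OF p(1) this]] show False by simp
  qed
  with p that show ?thesis by blast
qed

lemma graph_dist_pos:
  assumes "graph_connected V E" "x \<in> V" "y \<in> V" "x \<noteq> y"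
  shows "0 < graph_dist V E x y"
proof (rule ccontr)
  assume dist: "\<not> 0 < graph_dist V E x y"
  obtain p where "is_walk V E p x y" "length p = Suc (graph_dist V E x y)"
    using shortest_walk_exists[OF assms(1-3)] by blast
  with dist assms(4) show False by (cases p) (auto simp: is_walk_def)
qed

lemma degree_pos:
  assumes "simple_graph V E" "graph_connected V E" "card V \<ge> 2" "z \<in> V"
  shows "0 < degree V E z"
proof -
  have "\<not> V \<subseteq> {z}"
  proof
    assume "V \<subseteq> {z}"
    then have "card V \<le> card {z}" by (intro card_mono) auto
    with assms(3) show False by simp
  qed
  then obtain y where y: "y \<in> V" "y \<noteq> z" by blast
  obtain p where p: "is_walk V E p z y" "length p = Suc (graph_dist V E z y)"
    using shortest_walk_exists[OF assms(2,4) y(1)] by blast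
  have "Suc 0 < length p" using p(2) graph_dist_pos[OF assms(2,4) y(1)] y(2) by simp
  with p(1) have "p ! 0 = z" "E z (p ! Suc 0)" unfolding is_walk_def by (auto simp: hd_conv_nth)
  then have "p ! Suc 0 \<in> {w \<in> V. E z w}" using assms(1) by (auto simp: simple_graph_def)
  moreover have "finite V" using assms(1) by (simp add: simple_graph_def)
  ultimately show ?thesis unfolding degree_def by (auto simp: card_gt_0_iff)
qed

lemma distinct_walk_energy_le:
  fixes f :: "'a \<Rightarrow> real"
  assumes G: "simple_graph V E" and p: "is_walk V E p x y" "distinct p" "length p = Suc D"
  shows "2 * (\<Sum>i<D. (f (p ! Suc i) - f (p ! i))\<^sup>2)
           \<le> (\<Sum>a\<in>V. \<Sum>b\<in>{w \<in> V. E a w}. (f a - f b)\<^sup>2)"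
proof -
  have fin: "finite V" and sym: "\<And>a b. E a b \<Longrightarrow> E b a"
    and inV: "\<And>a b. E a b \<Longrightarrow> a \<in> V \<and> b \<in> V"
    using G unfolding simple_graph_def by auto
  have edge: "E (p ! i) (p ! Suc i)" if "i < D" for i using p that by (simp add: is_walk_def)
  have inj: "i = j" if "i \<le> D" "j \<le> D" "p ! i = p ! j" for i j
    using nth_eq_iff_index_eq[OF p(2), of i j] p(3) that by simp
  \<comment> \<open>The edge sum counts every edge in both directions; as \<open>p\<close> is distinct, its
      \<open>D\<close> edges give \<open>2 D\<close> pairwise different arcs.\<close>
  define g where "g = (\<lambda>(a, b). (f a - f b)\<^sup>2)"
  define Arcs where "Arcs = Sigma V (\<lambda>a. {w \<in> V. E a w})"
  define Fwd where "Fwd = (\<lambda>i. (p ! i, p ! Suc i)) ` {..<D}"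
  define Bwd where "Bwd = (\<lambda>i. (p ! Suc i, p ! i)) ` {..<D}"
  have sub: "Fwd \<union> Bwd \<subseteq> Arcs"
    unfolding Fwd_def Bwd_def Arcs_def using edge inV sym by blast
  have disj: "Fwd \<inter> Bwd = {}"
  proof -
    have False if "i < D" "j < D" "p ! i = p ! Suc j" "p ! Suc i = p ! j" for i j
      using inj[of i "Suc j"] inj[of "Suc i" j] that by simp
    then show ?thesis unfolding Fwd_def Bwd_def by auto
  qed
  have fin_arcs: "finite Arcs" unfolding Arcs_def using fin by auto
  have "sum g Fwd + sum g Bwd = sum g (Fwd \<union> Bwd)"
    using disj sub fin_arcs by (intro sum.union_disjoint[symmetric]) (auto intro: finite_subset)
  also have "\<dots> \<le> sum g Arcs"
    by (rule sum_mono2[OF fin_arcs sub]) (simp add: g_def split: prod.split)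
  finally have "sum g Fwd + sum g Bwd \<le> sum g Arcs" .
  moreover have "inj_on (\<lambda>i. (p ! i, p ! Suc i)) {..<D}" "inj_on (\<lambda>i. (p ! Suc i, p ! i)) {..<D}"
    using inj by (auto simp: inj_on_def)
  then have "sum g Fwd = (\<Sum>i<D. (f (p ! Suc i) - f (p ! i))\<^sup>2)"
    "sum g Bwd = (\<Sum>i<D. (f (p ! Suc i) - f (p ! i))\<^sup>2)"
    unfolding Fwd_def Bwd_def g_def by (simp_all add: sum.reindex power2_commute)
  moreover have "sum g Arcs = (\<Sum>a\<in>V. \<Sum>b\<in>{w \<in> V. E a w}. (f a - f b)\<^sup>2)"
    unfolding Arcs_def g_def using fin by (subst sum.Sigma) auto
  ultimately show ?thesis by simp
qed

lemma distinct_walk_energy_ge: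
  fixes f :: "'a \<Rightarrow> real"
  assumes "simple_graph V E" "is_walk V E p x y" "distinct p" "length p = Suc D"
  shows "2 * (f y - f x)\<^sup>2 \<le> real D * (\<Sum>a\<in>V. \<Sum>b\<in>{w \<in> V. E a w}. (f a - f b)\<^sup>2)"
proof -
  have "p ! 0 = x" "p ! D = y"
    using assms(2,4) unfolding is_walk_def by (auto simp: hd_conv_nth last_conv_nth)
  then have "(\<Sum>i<D. f (p ! Suc i) - f (p ! i)) = f y - f x"
    using sum_lessThan_telescope[of "\<lambda>i. f (p ! i)" D] by simp
  then have "(f y - f x)\<^sup>2 \<le> real D * (\<Sum>i<D. (f (p ! Suc i) - f (p ! i))\<^sup>2)"
    using sum_squared_le_sum_of_squares[of "\<lambda>i. f (p ! Suc i) - f (p ! i)" "{..<D}"]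
    by (simp add: mult.commute)
  then have "2 * (f y - f x)\<^sup>2 \<le> real D * (2 * (\<Sum>i<D. (f (p ! Suc i) - f (p ! i))\<^sup>2))"
    by simp
  also have "\<dots> \<le> real D * (\<Sum>a\<in>V. \<Sum>b\<in>{w \<in> V. E a w}. (f a - f b)\<^sup>2)"
    by (rule mult_left_mono[OF distinct_walk_energy_le[OF assms]]) simp
  finally show ?thesis .
qed

lemma edge_energy_ge_dist:
  fixes f :: "'a \<Rightarrow> real"
  assumes "simple_graph V E" "graph_connected V E" "x \<in> V" "y \<in> V"
  shows "2 * (f y - f x)\<^sup>2
           \<le> real (graph_dist V E x y) * (\<Sum>a\<in>V. \<Sum>b\<in>{w \<in> V. E a w}. (f a - f b)\<^sup>2)"
proof -
  obtain p where "is_walk V E p x y" "length p = Suc (graph_dist V E x y)" "distinct p"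
    using shortest_walk_exists[OF assms(2-4)] by blast
  then show ?thesis using distinct_walk_energy_ge[OF assms(1)] by blast
qed


lemma sum_split_sign:
  fixes f :: "'a \<Rightarrow> real" and g :: "'a \<Rightarrow> 'b::comm_monoid_add"
  assumes "finite A"
  shows "sum g A = sum g {z \<in> A. 0 \<le> f z} + sum g {z \<in> A. f z < 0}"
proof -
  have "A = {z \<in> A. 0 \<le> f z} \<union> {z \<in> A. f z < 0}" by auto
  then have "sum g A = sum g ({z \<in> A. 0 \<le> f z} \<union> {z \<in> A. f z < 0})" by simp
  also have "\<dots> = sum g {z \<in> A. 0 \<le> f z} + sum g {z \<in> A. f z < 0}"
    using assms by (intro sum.union_disjoint) auto
  finally show ?thesis .
qed

lemma balanced_weights_sign_change:
  fixes f w :: "'a \<Rightarrow> real"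
  assumes A: "finite A" and w: "\<And>z. z \<in> A \<Longrightarrow> 0 < w z" and bal: "(\<Sum>z\<in>A. f z * w z) = 0"
    and nz: "\<exists>z\<in>A. f z \<noteq> 0"
  shows "\<exists>a\<in>A. f a < 0" and "\<exists>b\<in>A. 0 < f b"
proof -
  obtain z0 where "z0 \<in> A" "f z0 \<noteq> 0" using nz by blast
  moreover have "0 < w z0" using w \<open>z0 \<in> A\<close> .
  ultimately have z0: "z0 \<in> A" "f z0 * w z0 \<noteq> 0" by simp_all
  show "\<exists>a\<in>A. f a < 0"
  proof (rule ccontr)
    assume "\<not> ?thesis"
    then have nonneg: "0 \<le> f z * w z" if "z \<in> A" for z
      using w[OF that] that by (simp add: not_less)
    have "f z0 * w z0 = 0" using sum_nonneg_eq_0_iff[OF A nonneg] bal z0(1) by simp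
    with z0 show False by simp
  qed
  show "\<exists>b\<in>A. 0 < f b"
  proof (rule ccontr)
    assume "\<not> ?thesis"
    then have nonneg: "0 \<le> - (f z * w z)" if "z \<in> A" for z
      using w[OF that] that by (simp add: not_less mult_nonpos_nonneg)
    have "(\<Sum>z\<in>A. - (f z * w z)) = 0" using bal by (simp add: sum_negf)
    then have "- (f z0 * w z0) = 0" using sum_nonneg_eq_0_iff[OF A nonneg] z0(1) by simp
    with z0 show False by simp
  qed
qed

lemma weighted_sum_squares_le_range_mass:
  fixes f w :: "'a \<Rightarrow> real"
  assumes A: "finite A" and w: "\<And>z. z \<in> A \<Longrightarrow> 0 \<le> w z" and bal: "(\<Sum>z\<in>A. f z * w z) = 0"
    and range: "\<And>z. z \<in> A \<Longrightarrow> m \<le> f z \<and> f z \<le> M"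
  shows "(\<Sum>z\<in>A. (f z)\<^sup>2 * w z) \<le> (M - m) * (\<Sum>z\<in>{z \<in> A. 0 \<le> f z}. f z * w z)"
proof -
  let ?P = "{z \<in> A. 0 \<le> f z}" and ?N = "{z \<in> A. f z < 0}"
  have neg_mass: "(\<Sum>z\<in>?N. f z * w z) = - (\<Sum>z\<in>?P. f z * w z)"
    using sum_split_sign[OF A, of "\<lambda>z. f z * w z" f] bal by simp
  have "(\<Sum>z\<in>?P. (f z)\<^sup>2 * w z) \<le> (\<Sum>z\<in>?P. M * (f z * w z))"
  proof (rule sum_mono)
    fix z assume "z \<in> ?P"
    then have "(f z)\<^sup>2 \<le> M * f z" using range by (simp add: power2_eq_square mult_right_mono)
    then show "(f z)\<^sup>2 * w z \<le> M * (f z * w z)"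
      using w \<open>z \<in> ?P\<close> by (simp add: mult_right_mono flip: mult.assoc)
  qed
  moreover have "(\<Sum>z\<in>?N. (f z)\<^sup>2 * w z) \<le> (\<Sum>z\<in>?N. m * (f z * w z))"
  proof (rule sum_mono)
    fix z assume "z \<in> ?N"
    then have "(f z)\<^sup>2 \<le> m * f z" using range by (simp add: power2_eq_square mult_right_mono_neg)
    then show "(f z)\<^sup>2 * w z \<le> m * (f z * w z)"
      using w \<open>z \<in> ?N\<close> by (simp add: mult_right_mono flip: mult.assoc)
  qed
  ultimately show ?thesis
    using sum_split_sign[OF A, of "\<lambda>z. (f z)\<^sup>2 * w z" f] neg_mass
    by (simp add: sum_distrib_left[symmetric] algebra_simps)
qed

lemma weighted_positive_mass_le:
  fixes f w :: "'a \<Rightarrow> real"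
  assumes A: "finite A" and w: "\<And>z. z \<in> A \<Longrightarrow> 0 \<le> w z" and bal: "(\<Sum>z\<in>A. f z * w z) = 0"
    and range: "\<And>z. z \<in> A \<Longrightarrow> m \<le> f z \<and> f z \<le> M" and "m \<le> M"
  shows "(\<Sum>z\<in>{z \<in> A. 0 \<le> f z}. f z * w z)
           \<le> (M - m) / 2 * sqrt ((\<Sum>z\<in>{z \<in> A. 0 \<le> f z}. w z) * (\<Sum>z\<in>{z \<in> A. f z < 0}. w z))"
proof -
  let ?P = "{z \<in> A. 0 \<le> f z}" and ?N = "{z \<in> A. f z < 0}"
  define S where "S = (\<Sum>z\<in>?P. f z * w z)"
  define X where "X = (\<Sum>z\<in>?P. w z) * (\<Sum>z\<in>?N. w z)"
  have S_nonneg: "0 \<le> S" unfolding S_def using w by (intro sum_nonneg) auto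
  have S_le_P: "S \<le> M * (\<Sum>z\<in>?P. w z)"
    unfolding S_def sum_distrib_left using range w by (intro sum_mono) (auto intro: mult_right_mono)
  have "m * (\<Sum>z\<in>?N. w z) \<le> (\<Sum>z\<in>?N. f z * w z)"
    unfolding sum_distrib_left using range w by (intro sum_mono) (auto intro: mult_right_mono)
  moreover have "S + (\<Sum>z\<in>?N. f z * w z) = 0"
    using sum_split_sign[OF A, of "\<lambda>z. f z * w z" f] bal by (simp add: S_def)
  ultimately have S_le_N: "S \<le> (- m) * (\<Sum>z\<in>?N. w z)" by simp
  have X_nonneg: "0 \<le> X" unfolding X_def using w by (intro mult_nonneg_nonneg sum_nonneg) auto
  have "S\<^sup>2 \<le> (M * (\<Sum>z\<in>?P. w z)) * ((- m) * (\<Sum>z\<in>?N. w z))"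
    unfolding power2_eq_square using S_le_P S_le_N S_nonneg by (intro mult_mono) auto
  also have "\<dots> = M * (- m) * X" unfolding X_def by (simp add: algebra_simps)
  also have "\<dots> \<le> ((M - m) / 2)\<^sup>2 * X"
  proof (rule mult_right_mono[OF _ X_nonneg])
    \<comment> \<open>AM-GM: the difference is \<open>((M + m) / 2)\<^sup>2\<close>\<close>
    have "0 \<le> (M + m)\<^sup>2" by simp
    then show "M * (- m) \<le> ((M - m) / 2)\<^sup>2" by (simp add: power2_eq_square field_simps)
  qed
  finally have "S \<le> sqrt (((M - m) / 2)\<^sup>2 * X)" by (rule real_le_rsqrt)
  then show ?thesis using \<open>m \<le> M\<close> by (simp add: S_def X_def real_sqrt_mult)
qed

lemma weighted_sum_squares_le:
  fixes f w :: "'a \<Rightarrow> real"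
  assumes "finite A" "\<And>z. z \<in> A \<Longrightarrow> 0 \<le> w z" "(\<Sum>z\<in>A. f z * w z) = 0"
    and "\<And>z. z \<in> A \<Longrightarrow> m \<le> f z \<and> f z \<le> M" "m \<le> M"
  shows "(\<Sum>z\<in>A. (f z)\<^sup>2 * w z)
           \<le> (M - m)\<^sup>2 / 2 * sqrt ((\<Sum>z\<in>{z \<in> A. 0 \<le> f z}. w z) * (\<Sum>z\<in>{z \<in> A. f z < 0}. w z))"
proof -
  have "(\<Sum>z\<in>A. (f z)\<^sup>2 * w z) \<le> (M - m) * (\<Sum>z\<in>{z \<in> A. 0 \<le> f z}. f z * w z)"
    by (rule weighted_sum_squares_le_range_mass[OF assms(1-4)])
  also have "\<dots> \<le> (M - m) * ((M - m) / 2
      * sqrt ((\<Sum>z\<in>{z \<in> A. 0 \<le> f z}. w z) * (\<Sum>z\<in>{z \<in> A. f z < 0}. w z)))"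
    using weighted_positive_mass_le[OF assms] assms(5) by (intro mult_left_mono) auto
  finally show ?thesis by (simp add: power2_eq_square)
qed

lemma weighted_sum_squares_pos:
  fixes f w :: "'a \<Rightarrow> real"
  assumes A: "finite A" and w: "\<And>z. z \<in> A \<Longrightarrow> 0 < w z" and nz: "\<exists>z\<in>A. f z \<noteq> 0"
  shows "0 < (\<Sum>z\<in>A. (f z)\<^sup>2 * w z)"
proof -
  obtain z0 where z0: "z0 \<in> A" "f z0 \<noteq> 0" using nz by blast
  show ?thesis
  proof (rule sum_pos2[OF A z0(1)])
    show "0 < (f z0)\<^sup>2 * w z0" using z0 w[OF z0(1)] by simp
    show "0 \<le> (f z)\<^sup>2 * w z" if "z \<in> A" for z using w[OF that] by simp
  qed
qed

lemma degree_weighted_sum_squares_le: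
  fixes f :: "'a \<Rightarrow> real"
  assumes "simple_graph V E" "(\<Sum>z\<in>V. f z * real (degree V E z)) = 0"
    and "x \<in> V" "\<forall>z\<in>V. f x \<le> f z \<and> f z \<le> f y"
  shows "(\<Sum>z\<in>V. (f z)\<^sup>2 * real (degree V E z))
           \<le> (f y - f x)\<^sup>2 / 2 * sqrt (vol_P V E f * vol_N V E f)"
  unfolding vol_P_def vol_N_def
proof (rule weighted_sum_squares_le)
  show "finite V" using assms(1) by (simp add: simple_graph_def)
  show "f x \<le> f y" using assms(3,4) by blast
qed (use assms(2,4) in auto)

lemma rayleigh_quotient_ge_of_bounds:
  fixes c d n s den :: real
  assumes "0 < den" "0 < d" "0 \<le> c" "2 * c \<le> d * n" "den \<le> c / 2 * s"
  shows "2 / (d * s) \<le> (n / 2) / den"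
proof -
  have "0 < s"
  proof (rule ccontr)
    assume "\<not> 0 < s"
    then have "c / 2 * s \<le> 0" using assms(3) by (simp add: mult_nonneg_nonpos)
    with assms(1,5) show False by linarith
  qed
  have "4 * den \<le> 2 * c * s" using assms(5) by simp
  also have "\<dots> \<le> d * n * s" using assms(4) \<open>0 < s\<close> by (intro mult_right_mono) auto
  finally show ?thesis using assms(1,2) \<open>0 < s\<close> by (simp add: field_simps)
qed

theorem lemma2p2:
  fixes V :: "'a set" and E :: "'a \<Rightarrow> 'a \<Rightarrow> bool" and f :: "'a \<Rightarrow> real" and u v :: 'a
  assumes "simple_graph V E"
    and "graph_connected V E"
    and "card V \<ge> 2"
    and "harmonic_eigenfunction V E f"
    and "u \<in> V" and "v \<in> V"
    and "\<forall>z\<in>V. f u \<le> f z \<and> f z \<le> f v"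
  shows "lambda1 V E \<ge> 2 / (real (graph_dist V E u v) * sqrt (vol_P V E f * vol_N V E f))"
proof -
  let ?d = "\<lambda>z. real (degree V E z)"
  have fin: "finite V" using assms(1) by (simp add: simple_graph_def)
  have d_pos: "0 < ?d z" if "z \<in> V" for z using degree_pos[OF assms(1-3) that] by simp
  have bal: "(\<Sum>z\<in>V. f z * ?d z) = 0" and nz: "\<exists>z\<in>V. f z \<noteq> 0"
    and lam: "lambda1 V E = rayleigh V E f"
    using assms(4) unfolding harmonic_eigenfunction_def admissible_def by auto
  obtain a b where "a \<in> V" "f a < 0" "b \<in> V" "0 < f b"
    using balanced_weights_sign_change[where w = ?d, OF fin d_pos bal nz] by blast
  moreover from this assms(7) have "f u \<le> f a" "f b \<le> f v" by auto
  ultimately have "u \<noteq> v" by force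
  show ?thesis
    unfolding lam rayleigh_def
  proof (rule rayleigh_quotient_ge_of_bounds[where c = "(f v - f u)\<^sup>2"])
    show "0 < (\<Sum>z\<in>V. (f z)\<^sup>2 * ?d z)" by (rule weighted_sum_squares_pos[OF fin d_pos nz])
    show "0 < real (graph_dist V E u v)" using graph_dist_pos[OF assms(2,5,6) \<open>u \<noteq> v\<close>] by simp
    show "(\<Sum>z\<in>V. (f z)\<^sup>2 * ?d z) \<le> (f v - f u)\<^sup>2 / 2 * sqrt (vol_P V E f * vol_N V E f)"
      by (rule degree_weighted_sum_squares_le[OF assms(1) bal assms(5,7)])
  qed (simp_all add: edge_energy_ge_dist[OF assms(1,2,5,6)])
qed

end
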